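(* Let $A_1\le A_2$ and $B_1\le B_2$ be groups with $[A_2:A_1]<\infty$, $[B_2:B_1]<\infty$, $A_1\trianglelefteq B_1$, $A_2\trianglelefteq B_2$, and $A_1=B_1\cap A_2$. Let $\varphi:B_1\to B_2$ be a homomorphism with $\varphi(A_1)\subseteq A_2$. Let $\varphi'=\varphi|_{A_1}:A_1\to A_2$, and let $\bar\varphi:B_1A_2/A_2\to B_2/A_2$, $bA_2\mapsto\varphi(b)A_2$, be the induced map (using $B_1/A_1\cong B_1A_2/A_2$). Then: (1) if $R(\bar\varphi)=\infty$, then $R(\varphi)=\infty$; (2) if $R(\bar\varphi)<\infty$, $|\mathrm{Fix}(\bar\varphi)|<\infty$ and $R(\varphi')=\infty$, then $R(\varphi)=\infty$; (3) if $A_2\le Z(B_2)$, then $R(\varphi)\le R(\bar\varphi)R(\varphi')$ (with the product defined to be $\infty$ if either factor is $\infty$).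
   Context: For a group $K$, a finite-index subgroup $L\le K$ and a homomorphism $\phi:L\to K$, $R(\phi)\in\mathbb Z_{>0}\cup\{\infty\}$ is the number of classes of the relation $\alpha\sim_\phi\beta\iff\exists\gamma\in L:\ \alpha=\gamma\beta\phi(\gamma^{-1})$ on $K$. $\mathrm{Fix}(\bar\varphi)=\{x\in B_1A_2/A_2:\bar\varphi(x)=x\}$. *)

theory Defs
  imports "HOL-Algebra.Algebra" "HOL-Library.Extended_Nat"
begin

definition twisted_rel :: "('a, 'b) monoid_scheme \<Rightarrow> 'a set \<Rightarrow> ('a \<Rightarrow> 'a) \<Rightarrow> ('a \<times> 'a) set" where
  "twisted_rel K L \<phi> = {(\<alpha>, \<beta>). \<alpha> \<in> carrier K \<and> \<beta> \<in> carrier K \<and>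
      (\<exists>\<gamma>\<in>L. \<alpha> = \<gamma> \<otimes>\<^bsub>K\<^esub> \<beta> \<otimes>\<^bsub>K\<^esub> \<phi> (inv\<^bsub>K\<^esub> \<gamma>))}"

definition reidemeister :: "('a, 'b) monoid_scheme \<Rightarrow> 'a set \<Rightarrow> ('a \<Rightarrow> 'a) \<Rightarrow> enat" where
  "reidemeister K L \<phi> =
     (if finite (carrier K // twisted_rel K L \<phi>) then enat (card (carrier K // twisted_rel K L \<phi>)) else \<infinity>)"

text \<open>The induced map bA_2 \<mapsto> phi(b)A_2 on B_1A_2/A_2 (well defined under the hypotheses).\<close>
definition induced_map :: "('a, 'b) monoid_scheme \<Rightarrow> 'a set \<Rightarrow> 'a set \<Rightarrow> ('a \<Rightarrow> 'a) \<Rightarrow> 'a set \<Rightarrow> 'a set" where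
  "induced_map Gr B1 A2 \<phi> S = r_coset Gr A2 (\<phi> (SOME b. b \<in> B1 \<and> S = r_coset Gr A2 b))"

end

theory Submission
  imports Defs
begin

text \<open>Write \<open>E\<close>, \<open>Ebar\<close>, \<open>E'\<close> for the twisted conjugacy relations of \<open>\<phi>\<close>, \<open>\<phi>bar\<close> and
  \<open>\<phi>' = \<phi>|A1\<close>. The projection \<open>G \<rightarrow> G/A2\<close> maps every \<open>E\<close>-class onto an \<open>Ebar\<close>-class, so
  \<open>R(\<phi>bar) \<le> R(\<phi>)\<close>, which gives (1).
  If \<open>a, a' \<in> A2\<close> and \<open>a = \<gamma> a' \<phi>(\<gamma>)\<inverse>\<close> with \<open>\<gamma> \<in> B1\<close>, then \<open>\<gamma> \<phi>(\<gamma>)\<inverse> \<in> A2\<close>, so \<open>\<gamma>A2\<close> is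
  fixed by \<open>\<phi>bar\<close>; replacing \<open>\<gamma>\<close> by a chosen representative of its coset moves \<open>a\<close> only within
  its \<open>E'\<close>-class. So the \<open>E'\<close>-classes are covered by pairs (\<open>E\<close>-class, fixed coset), i.e.
  \<open>R(\<phi>') \<le> R(\<phi>) |Fix \<phi>bar|\<close>, which gives (2).
  Every \<open>E\<close>-class contains an element \<open>g a\<close> with \<open>g\<close> a chosen representative of an
  \<open>Ebar\<close>-class and \<open>a \<in> A2\<close>; when \<open>A2\<close> is central, the \<open>E\<close>-class of \<open>g a\<close> depends only on
  the \<open>E'\<close>-class of \<open>a\<close>, which gives (3).\<close>

definition ecard :: "'a set \<Rightarrow> enat" where
  "ecard S = (if finite S then enat (card S) else \<infinity>)"

lemma ecard_eq_infinity_iff [simp]: "ecard S = \<infinity> \<longleftrightarrow> infinite S"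
  by (simp add: ecard_def)

lemma ecard_mono: "S \<subseteq> T \<Longrightarrow> ecard S \<le> ecard T"
  by (auto simp: ecard_def card_mono dest: finite_subset)

lemma ecard_image_le: "ecard (h ` S) \<le> ecard S"
  by (simp add: ecard_def card_image_le)

text \<open>No side conditions are needed: an empty factor is matched by \<open>0 * \<infinity> = 0\<close> in \<open>enat\<close>.\<close>
lemma ecard_Times: "ecard (S \<times> T) = ecard S * ecard T"
  by (auto simp: ecard_def card_cartesian_product finite_cartesian_product_iff zero_enat_def
      dest: finite_cartesian_productD1 finite_cartesian_productD2)

lemma reidemeister_eq_ecard: "reidemeister K L f = ecard (carrier K // twisted_rel K L f)"
  by (simp add: reidemeister_def ecard_def)

definition twisted_conj :: "('a, 'b) monoid_scheme \<Rightarrow> ('a \<Rightarrow> 'a) \<Rightarrow> 'a \<Rightarrow> 'a \<Rightarrow> 'a" where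
  "twisted_conj K f \<gamma> x = \<gamma> \<otimes>\<^bsub>K\<^esub> x \<otimes>\<^bsub>K\<^esub> f (inv\<^bsub>K\<^esub> \<gamma>)"

lemma twisted_rel_iff:
  "(\<alpha>, \<beta>) \<in> twisted_rel K L f \<longleftrightarrow>
     \<alpha> \<in> carrier K \<and> \<beta> \<in> carrier K \<and> (\<exists>\<gamma>\<in>L. \<alpha> = twisted_conj K f \<gamma> \<beta>)"
  by (simp add: twisted_rel_def twisted_conj_def)

lemma twisted_conj_restrict:
  "group G \<Longrightarrow> subgroup H G \<Longrightarrow> \<gamma> \<in> H \<Longrightarrow> twisted_conj (G\<lparr>carrier := H\<rparr>) f \<gamma> x = twisted_conj G f \<gamma> x"
  by (simp add: twisted_conj_def group.m_inv_consistent)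

locale twisted_hom = L: subgroup L G + group G for L and G (structure) +
  fixes f :: "'a \<Rightarrow> 'a"
  assumes f_hom: "f \<in> hom (G\<lparr>carrier := L\<rparr>) G"
begin

lemma f_closed: "x \<in> L \<Longrightarrow> f x \<in> carrier G"
  using f_hom by (auto simp: hom_def)

lemma f_mult: "x \<in> L \<Longrightarrow> y \<in> L \<Longrightarrow> f (x \<otimes> y) = f x \<otimes> f y"
  using f_hom by (auto simp: hom_def)

lemma f_group_hom: "group_hom (G\<lparr>carrier := L\<rparr>) G f"
  by (intro group_hom.intro group_hom_axioms.intro subgroup_imp_group L.subgroup_axioms f_hom is_group)

lemma f_one: "f \<one> = \<one>"
  using group_hom.hom_one[OF f_group_hom] by simp

lemma f_inv: "x \<in> L \<Longrightarrow> f (inv x) = inv (f x)"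
  using group_hom.hom_inv[OF f_group_hom, of x] by (simp add: m_inv_consistent L.subgroup_axioms)

lemma twisted_conj_closed: "\<gamma> \<in> L \<Longrightarrow> x \<in> carrier G \<Longrightarrow> twisted_conj G f \<gamma> x \<in> carrier G"
  by (simp add: twisted_conj_def f_closed)

lemma twisted_conj_one: "x \<in> carrier G \<Longrightarrow> twisted_conj G f \<one> x = x"
  by (simp add: twisted_conj_def f_one)

lemma twisted_conj_mult:
  assumes "\<gamma> \<in> L" "\<delta> \<in> L" "x \<in> carrier G"
  shows "twisted_conj G f (\<gamma> \<otimes> \<delta>) x = twisted_conj G f \<gamma> (twisted_conj G f \<delta> x)"
  using assms by (simp add: twisted_conj_def inv_mult_group f_mult f_inv f_closed m_assoc)

lemma twisted_conj_inv:
  assumes "\<gamma> \<in> L" "x \<in> carrier G"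
  shows "twisted_conj G f (inv \<gamma>) (twisted_conj G f \<gamma> x) = x"
  using twisted_conj_mult[of "inv \<gamma>" \<gamma> x] assms by (simp add: twisted_conj_one)

lemma twisted_rel_equiv: "equiv (carrier G) (twisted_rel G L f)"
proof (rule equivI)
  show "twisted_rel G L f \<subseteq> carrier G \<times> carrier G"
    by (auto simp: twisted_rel_def)
  show "refl_on (carrier G) (twisted_rel G L f)"
  proof (rule refl_onI)
    fix x assume "x \<in> carrier G"
    then show "(x, x) \<in> twisted_rel G L f"
      using L.one_closed twisted_conj_one[of x] unfolding twisted_rel_iff by metis
  qed
  show "sym (twisted_rel G L f)"
  proof (rule symI)
    fix x y assume "(x, y) \<in> twisted_rel G L f"
    then obtain \<gamma> where "\<gamma> \<in> L" "x = twisted_conj G f \<gamma> y" "y \<in> carrier G"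
      unfolding twisted_rel_iff by blast
    then show "(y, x) \<in> twisted_rel G L f"
      using twisted_conj_inv twisted_conj_closed L.m_inv_closed unfolding twisted_rel_iff by metis
  qed
  show "trans (twisted_rel G L f)"
  proof (rule transI)
    fix x y z assume "(x, y) \<in> twisted_rel G L f" "(y, z) \<in> twisted_rel G L f"
    then obtain \<gamma> \<delta> where "\<gamma> \<in> L" "\<delta> \<in> L" "x = twisted_conj G f \<gamma> y" "y = twisted_conj G f \<delta> z"
      "x \<in> carrier G" "z \<in> carrier G"
      unfolding twisted_rel_iff by blast
    then show "(x, z) \<in> twisted_rel G L f"
      using twisted_conj_mult L.m_closed unfolding twisted_rel_iff by metis
  qed
qed

end

lemma (in group) inv_cancel_left: "x \<in> carrier G \<Longrightarrow> y \<in> carrier G \<Longrightarrow> inv x \<otimes> (x \<otimes> y) = y"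
  by (simp add: m_assoc [symmetric])

lemma (in group) rcos_eq_iff:
  "subgroup H G \<Longrightarrow> x \<in> carrier G \<Longrightarrow> y \<in> carrier G \<Longrightarrow> H #> x = H #> y \<longleftrightarrow> x \<otimes> inv y \<in> H"
  by (metis subgroup.rcos_module is_group rcos_self repr_independence)

locale twisted_extension = group G for G (structure) +
  fixes A2 B1 :: "'a set" and \<phi> :: "'a \<Rightarrow> 'a"
  assumes A2_normal: "A2 \<lhd> G"
    and B1_subgroup: "subgroup B1 G"
    and \<phi>_hom: "\<phi> \<in> hom (G\<lparr>carrier := B1\<rparr>) G"
    and \<phi>_A1: "\<phi> ` (B1 \<inter> A2) \<subseteq> A2"
begin

sublocale A2: normal A2 G
  by (rule A2_normal)

sublocale B1: twisted_hom B1 G \<phi>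
  by (intro twisted_hom.intro twisted_hom_axioms.intro B1_subgroup is_group \<phi>_hom)

abbreviation A1 :: "'a set" where "A1 \<equiv> B1 \<inter> A2"

abbreviation Q :: "'a set set" where "Q \<equiv> (\<lambda>b. A2 #> b) ` B1"

abbreviation \<phi>bar :: "'a set \<Rightarrow> 'a set" where "\<phi>bar \<equiv> induced_map G B1 A2 \<phi>"

definition coset_rep :: "'a set \<Rightarrow> 'a" where
  "coset_rep S = (SOME b. b \<in> B1 \<and> S = A2 #> b)"

lemma coset_rep: "S \<in> Q \<Longrightarrow> coset_rep S \<in> B1 \<and> S = A2 #> coset_rep S"
  unfolding coset_rep_def by (rule someI_ex) blast

lemma A1_subgroup: "subgroup A1 G"
  by (rule subgroups_Inter_pair[OF B1_subgroup A2.subgroup_axioms])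

lemma induced_map_rcos:
  assumes b: "b \<in> B1"
  shows "\<phi>bar (A2 #> b) = A2 #> \<phi> b"
proof -
  obtain b' where b': "b' \<in> B1" "A2 #> b = A2 #> b'" "\<phi>bar (A2 #> b) = A2 #> \<phi> b'"
    using coset_rep[of "A2 #> b"] b unfolding induced_map_def coset_rep_def by auto
  then have "b \<otimes> inv b' \<in> A1"
    using b rcos_eq_iff[OF A2.subgroup_axioms] by (simp add: B1.L.m_closed B1.L.m_inv_closed)
  then have "\<phi> (b \<otimes> inv b') \<in> A2"
    using \<phi>_A1 by blast
  then have "\<phi> b \<otimes> inv (\<phi> b') \<in> A2"
    using b b' by (simp add: B1.f_mult B1.f_inv B1.L.m_inv_closed)
  then have "A2 #> \<phi> b = A2 #> \<phi> b'"
    using b b' rcos_eq_iff[OF A2.subgroup_axioms] by (simp add: B1.f_closed)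
  then show ?thesis
    using b'(3) by simp
qed

lemma rcos_group_hom: "group_hom G (G Mod A2) (\<lambda>x. A2 #> x)"
  by (intro group_hom.intro group_hom_axioms.intro is_group A2.factorgroup_is_group A2.r_coset_hom_Mod)

lemma induced_twisted_hom: "twisted_hom Q (G Mod A2) \<phi>bar"
proof (intro twisted_hom.intro twisted_hom_axioms.intro A2.factorgroup_is_group)
  show "subgroup Q (G Mod A2)"
    by (rule group_hom.subgroup_img_is_subgroup[OF rcos_group_hom B1_subgroup])
  show "\<phi>bar \<in> hom ((G Mod A2)\<lparr>carrier := Q\<rparr>) (G Mod A2)"
    by (auto intro!: homI simp: induced_map_rcos carrier_FactGroup B1.f_closed B1.f_mult
        A2.rcos_sum B1.L.m_closed)
qed

lemma rcos_twisted_conj: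
  assumes "\<gamma> \<in> B1" "x \<in> carrier G"
  shows "A2 #> twisted_conj G \<phi> \<gamma> x = twisted_conj (G Mod A2) \<phi>bar (A2 #> \<gamma>) (A2 #> x)"
proof -
  have "inv\<^bsub>G Mod A2\<^esub> (A2 #> \<gamma>) = A2 #> inv \<gamma>"
    using group_hom.hom_inv[OF rcos_group_hom] assms by simp
  then show ?thesis
    using assms by (simp add: twisted_conj_def induced_map_rcos A2.rcos_sum B1.f_closed)
qed

lemma twisted_rel_rcos:
  "(x, y) \<in> twisted_rel G B1 \<phi> \<Longrightarrow> (A2 #> x, A2 #> y) \<in> twisted_rel (G Mod A2) Q \<phi>bar"
  by (auto simp: twisted_rel_iff rcos_twisted_conj carrier_FactGroup)

lemma reidemeister_induced_le: "reidemeister (G Mod A2) Q \<phi>bar \<le> reidemeister G B1 \<phi>"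
proof -
  let ?E = "twisted_rel G B1 \<phi>" and ?Eb = "twisted_rel (G Mod A2) Q \<phi>bar"
  have Eb: "equiv (carrier (G Mod A2)) ?Eb"
    by (rule twisted_hom.twisted_rel_equiv[OF induced_twisted_hom])
  have class_image: "?Eb `` ((\<lambda>x. A2 #> x) ` (?E `` {g})) = ?Eb `` {A2 #> g}" if g: "g \<in> carrier G" for g
  proof
    show "?Eb `` ((\<lambda>x. A2 #> x) ` (?E `` {g})) \<subseteq> ?Eb `` {A2 #> g}"
      using twisted_rel_rcos Eb by (blast elim: equivE transE)
    show "?Eb `` {A2 #> g} \<subseteq> ?Eb `` ((\<lambda>x. A2 #> x) ` (?E `` {g}))"
      using equiv_class_self[OF B1.twisted_rel_equiv g] by blast
  qed
  have "carrier (G Mod A2) // ?Eb \<subseteq> (\<lambda>C. ?Eb `` ((\<lambda>x. A2 #> x) ` C)) ` (carrier G // ?E)"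
  proof
    fix D assume "D \<in> carrier (G Mod A2) // ?Eb"
    then obtain g where g: "g \<in> carrier G" "D = ?Eb `` {A2 #> g}"
      by (auto simp: quotient_def carrier_FactGroup)
    then have "D = ?Eb `` ((\<lambda>x. A2 #> x) ` (?E `` {g}))"
      using class_image by simp
    then show "D \<in> (\<lambda>C. ?Eb `` ((\<lambda>x. A2 #> x) ` C)) ` (carrier G // ?E)"
      using quotientI[OF g(1)] by blast
  qed
  then have "ecard (carrier (G Mod A2) // ?Eb) \<le> ecard (carrier G // ?E)"
    by (rule order_trans[OF ecard_mono ecard_image_le])
  then show ?thesis
    by (simp add: reidemeister_eq_ecard)
qed

lemma restricted_twisted_hom: "twisted_hom A1 (G\<lparr>carrier := A2\<rparr>) \<phi>"
proof (intro twisted_hom.intro twisted_hom_axioms.intro)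
  show "subgroup A1 (G\<lparr>carrier := A2\<rparr>)"
    by (rule subgroup_incl[OF A1_subgroup A2.subgroup_axioms]) blast
  show "group (G\<lparr>carrier := A2\<rparr>)"
    by (rule subgroup_imp_group[OF A2.subgroup_axioms])
  show "\<phi> \<in> hom (G\<lparr>carrier := A2\<rparr>\<lparr>carrier := A1\<rparr>) (G\<lparr>carrier := A2\<rparr>)"
    using \<phi>_A1 by (auto intro!: homI simp: B1.f_mult image_subset_iff)
qed

lemma restricted_twisted_rel_iff:
  "(a, a') \<in> twisted_rel (G\<lparr>carrier := A2\<rparr>) A1 \<phi> \<longleftrightarrow>
     a \<in> A2 \<and> a' \<in> A2 \<and> (\<exists>h\<in>A1. a = twisted_conj G \<phi> h a')"
  using twisted_conj_restrict[OF is_group A2.subgroup_axioms] by (auto simp: twisted_rel_iff)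

lemma twisted_conj_A1_closed:
  assumes "h \<in> A1" "y \<in> A2"
  shows "twisted_conj G \<phi> h y \<in> A2"
proof -
  have "\<phi> (inv h) \<in> A2"
    using \<phi>_A1 assms(1) subgroup.m_inv_closed[OF A1_subgroup] by blast
  then show ?thesis
    using assms by (simp add: twisted_conj_def A2.m_closed)
qed

lemma twisted_conj_A1_mem_iff:
  assumes "h \<in> A1" "y \<in> carrier G"
  shows "twisted_conj G \<phi> h y \<in> A2 \<longleftrightarrow> y \<in> A2"
proof
  assume "twisted_conj G \<phi> h y \<in> A2"
  then have "twisted_conj G \<phi> (inv h) (twisted_conj G \<phi> h y) \<in> A2"
    using assms(1) subgroup.m_inv_closed[OF A1_subgroup] twisted_conj_A1_closed by blast
  then show "y \<in> A2"
    using assms by (simp add: B1.twisted_conj_inv)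
qed (use assms twisted_conj_A1_closed in blast)

lemma twisted_conj_fixed:
  assumes \<gamma>: "\<gamma> \<in> B1" and a: "a \<in> A2" and conj: "twisted_conj G \<phi> \<gamma> a \<in> A2"
  shows "\<phi>bar (A2 #> \<gamma>) = A2 #> \<gamma>"
proof -
  have \<gamma>c: "\<gamma> \<in> carrier G" and ac: "a \<in> carrier G"
    using \<gamma> a by auto
  have "\<gamma> \<otimes> inv a \<otimes> inv \<gamma> \<otimes> twisted_conj G \<phi> \<gamma> a = \<gamma> \<otimes> inv (\<phi> \<gamma>)"
    using \<gamma> \<gamma>c ac by (simp add: twisted_conj_def B1.f_inv B1.f_closed m_assoc inv_cancel_left)
  moreover have "\<gamma> \<otimes> inv a \<otimes> inv \<gamma> \<otimes> twisted_conj G \<phi> \<gamma> a \<in> A2"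
    using A2.inv_op_closed2[OF \<gamma>c A2.m_inv_closed[OF a]] conj by (rule A2.m_closed)
  ultimately have "A2 #> \<gamma> = A2 #> \<phi> \<gamma>"
    using rcos_eq_iff[OF A2.subgroup_axioms] \<gamma> \<gamma>c by (simp add: B1.f_closed)
  then show ?thesis
    using induced_map_rcos[OF \<gamma>] by simp
qed

lemma twisted_conj_same_rcos:
  assumes "\<gamma> \<in> B1" "\<delta> \<in> B1" "A2 #> \<gamma> = A2 #> \<delta>" "x \<in> carrier G"
  shows "\<exists>h\<in>A1. twisted_conj G \<phi> \<gamma> x = twisted_conj G \<phi> h (twisted_conj G \<phi> \<delta> x)"
proof
  show "\<gamma> \<otimes> inv \<delta> \<in> A1"
    using assms rcos_eq_iff[OF A2.subgroup_axioms] by (auto intro: B1.L.m_closed B1.L.m_inv_closed)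
  then show "twisted_conj G \<phi> \<gamma> x = twisted_conj G \<phi> (\<gamma> \<otimes> inv \<delta>) (twisted_conj G \<phi> \<delta> x)"
    using assms by (simp add: B1.twisted_conj_mult[symmetric] m_assoc)
qed

lemma twisted_rel_A2_via_fixed_coset:
  assumes a: "a \<in> A2" and a': "a' \<in> A2" and aa': "(a, a') \<in> twisted_rel G B1 \<phi>"
  shows "\<exists>S\<in>{S \<in> Q. \<phi>bar S = S}.
           (a, twisted_conj G \<phi> (coset_rep S) a') \<in> twisted_rel (G\<lparr>carrier := A2\<rparr>) A1 \<phi>"
proof -
  obtain \<gamma> where \<gamma>: "\<gamma> \<in> B1" and a_eq: "a = twisted_conj G \<phi> \<gamma> a'"
    using aa' by (auto simp: twisted_rel_iff)
  define S where "S = A2 #> \<gamma>"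
  have S: "S \<in> Q" "\<phi>bar S = S"
    using \<gamma> twisted_conj_fixed[OF \<gamma> a'] a a_eq unfolding S_def by blast+
  have rep_S: "coset_rep S \<in> B1" "A2 #> \<gamma> = A2 #> coset_rep S"
    using coset_rep[OF S(1)] unfolding S_def by auto
  obtain h where h: "h \<in> A1" and a_eq': "a = twisted_conj G \<phi> h (twisted_conj G \<phi> (coset_rep S) a')"
    using twisted_conj_same_rcos[OF \<gamma> rep_S A2.mem_carrier[OF a']] a_eq by blast
  have "twisted_conj G \<phi> (coset_rep S) a' \<in> A2"
    using twisted_conj_A1_mem_iff[OF h B1.twisted_conj_closed[OF rep_S(1) A2.mem_carrier[OF a']]]
      a a_eq' by blast
  then have "(a, twisted_conj G \<phi> (coset_rep S) a') \<in> twisted_rel (G\<lparr>carrier := A2\<rparr>) A1 \<phi>"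
    using a h a_eq' unfolding restricted_twisted_rel_iff by blast
  then show ?thesis
    using S by blast
qed

lemma reidemeister_restricted_le:
  "reidemeister (G\<lparr>carrier := A2\<rparr>) A1 \<phi> \<le> reidemeister G B1 \<phi> * ecard {S \<in> Q. \<phi>bar S = S}"
proof -
  let ?E = "twisted_rel G B1 \<phi>" and ?E' = "twisted_rel (G\<lparr>carrier := A2\<rparr>) A1 \<phi>"
  let ?cls = "\<lambda>(D, S). ?E' `` {twisted_conj G \<phi> (coset_rep S) (SOME a. a \<in> D \<inter> A2)}"
  have E': "equiv A2 ?E'"
    using twisted_hom.twisted_rel_equiv[OF restricted_twisted_hom] by simp
  have "A2 // ?E' \<subseteq> ?cls ` (carrier G // ?E \<times> {S \<in> Q. \<phi>bar S = S})"
  proof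
    fix C assume "C \<in> A2 // ?E'"
    then obtain a where a: "a \<in> A2" and C: "C = ?E' `` {a}"
      by (auto elim: quotientE)
    define D where "D = ?E `` {a}"
    have D: "D \<in> carrier G // ?E"
      unfolding D_def using A2.mem_carrier[OF a] by (rule quotientI)
    have "a \<in> D \<inter> A2"
      unfolding D_def using equiv_class_self[OF B1.twisted_rel_equiv A2.mem_carrier[OF a]] a by blast
    then have "(SOME a. a \<in> D \<inter> A2) \<in> D \<inter> A2"
      by (rule someI)
    then have "(SOME a. a \<in> D \<inter> A2) \<in> A2" "(a, SOME a. a \<in> D \<inter> A2) \<in> ?E"
      unfolding D_def by auto
    then obtain S where S: "S \<in> {S \<in> Q. \<phi>bar S = S}"
      and aS: "(a, twisted_conj G \<phi> (coset_rep S) (SOME a. a \<in> D \<inter> A2)) \<in> ?E'"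
      using twisted_rel_A2_via_fixed_coset[OF a] by blast
    have "C = ?cls (D, S)"
      unfolding C using equiv_class_eq[OF E' aS] by simp
    then show "C \<in> ?cls ` (carrier G // ?E \<times> {S \<in> Q. \<phi>bar S = S})"
      using D S by blast
  qed
  then have "ecard (A2 // ?E') \<le> ecard (carrier G // ?E \<times> {S \<in> Q. \<phi>bar S = S})"
    by (rule order_trans[OF ecard_mono ecard_image_le])
  then show ?thesis
    by (simp add: reidemeister_eq_ecard ecard_Times)
qed

lemma twisted_rel_rcos_lift:
  assumes g: "g \<in> carrier G" and h: "h \<in> carrier G"
    and rel: "(A2 #> h, A2 #> g) \<in> twisted_rel (G Mod A2) Q \<phi>bar"
  shows "\<exists>a\<in>A2. (h, g \<otimes> a) \<in> twisted_rel G B1 \<phi>"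
proof -
  obtain \<gamma> where \<gamma>: "\<gamma> \<in> B1" and "A2 #> h = twisted_conj (G Mod A2) \<phi>bar (A2 #> \<gamma>) (A2 #> g)"
    using rel by (auto simp: twisted_rel_iff)
  then have "A2 #> h = A2 #> twisted_conj G \<phi> \<gamma> g"
    using rcos_twisted_conj[OF \<gamma> g] by simp
  then have "h \<in> A2 #> twisted_conj G \<phi> \<gamma> g"
    using h rcos_self[OF h A2.subgroup_axioms] by simp
  then obtain a0 where a0: "a0 \<in> A2" and h_eq: "h = a0 \<otimes> twisted_conj G \<phi> \<gamma> g"
    unfolding r_coset_def by blast
  have \<gamma>g: "\<gamma> \<otimes> g \<in> carrier G"
    using \<gamma> g by simp
  define a where "a = inv (\<gamma> \<otimes> g) \<otimes> a0 \<otimes> (\<gamma> \<otimes> g)"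
  have a: "a \<in> A2"
    unfolding a_def using A2.inv_op_closed1[OF \<gamma>g a0] .
  have a_conj: "(\<gamma> \<otimes> g) \<otimes> a = a0 \<otimes> (\<gamma> \<otimes> g)"
    using \<gamma>g a0 unfolding a_def by (simp add: m_assoc [symmetric])
  have "twisted_conj G \<phi> \<gamma> (g \<otimes> a) = (\<gamma> \<otimes> g) \<otimes> a \<otimes> \<phi> (inv \<gamma>)"
    using \<gamma> g a by (simp add: twisted_conj_def m_assoc)
  also have "\<dots> = h"
    using \<gamma> g a0 unfolding a_conj h_eq twisted_conj_def by (simp add: m_assoc B1.f_closed)
  finally show ?thesis
    using a g h \<gamma> by (auto simp: twisted_rel_iff)
qed

lemma twisted_rel_mult_central:
  assumes central: "\<forall>a\<in>A2. \<forall>x\<in>carrier G. a \<otimes> x = x \<otimes> a" and g: "g \<in> carrier G"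
    and rel: "(a, a') \<in> twisted_rel (G\<lparr>carrier := A2\<rparr>) A1 \<phi>"
  shows "(g \<otimes> a, g \<otimes> a') \<in> twisted_rel G B1 \<phi>"
proof -
  obtain h where h: "h \<in> A1" and a: "a \<in> A2" "a' \<in> A2" and a_eq: "a = twisted_conj G \<phi> h a'"
    using rel by (auto simp: restricted_twisted_rel_iff)
  have "g \<otimes> h = h \<otimes> g"
    using central g h by (metis IntD2)
  then have "g \<otimes> a = twisted_conj G \<phi> h (g \<otimes> a')"
    using g h a by (simp add: a_eq twisted_conj_def m_assoc [symmetric] B1.f_closed)
  then show ?thesis
    using g h a by (auto simp: twisted_rel_iff B1.twisted_conj_closed)
qed

lemma reidemeister_le_mult:
  assumes central: "\<forall>a\<in>A2. \<forall>x\<in>carrier G. a \<otimes> x = x \<otimes> a"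
  shows "reidemeister G B1 \<phi> \<le> reidemeister (G Mod A2) Q \<phi>bar * reidemeister (G\<lparr>carrier := A2\<rparr>) A1 \<phi>"
proof -
  let ?E = "twisted_rel G B1 \<phi>" and ?Eb = "twisted_rel (G Mod A2) Q \<phi>bar"
    and ?E' = "twisted_rel (G\<lparr>carrier := A2\<rparr>) A1 \<phi>"
  let ?cls = "\<lambda>(Cb, C'). ?E `` {(SOME g. g \<in> carrier G \<and> A2 #> g \<in> Cb) \<otimes> (SOME a. a \<in> C')}"
  have Eb: "equiv (carrier (G Mod A2)) ?Eb"
    by (rule twisted_hom.twisted_rel_equiv[OF induced_twisted_hom])
  have E': "equiv A2 ?E'"
    using twisted_hom.twisted_rel_equiv[OF restricted_twisted_hom] by simp
  have "carrier G // ?E \<subseteq> ?cls ` (carrier (G Mod A2) // ?Eb \<times> A2 // ?E')"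
  proof
    fix C assume "C \<in> carrier G // ?E"
    then obtain h where h: "h \<in> carrier G" and C: "C = ?E `` {h}"
      by (auto elim: quotientE)
    have hc: "A2 #> h \<in> carrier (G Mod A2)"
      using h by (simp add: carrier_FactGroup)
    define Cb where "Cb = ?Eb `` {A2 #> h}"
    define g where "g = (SOME g. g \<in> carrier G \<and> A2 #> g \<in> Cb)"
    have "h \<in> carrier G \<and> A2 #> h \<in> Cb"
      unfolding Cb_def using h equiv_class_self[OF Eb hc] by blast
    then have g: "g \<in> carrier G" "(A2 #> h, A2 #> g) \<in> ?Eb"
      unfolding g_def Cb_def by (metis (mono_tags, lifting) Image_singleton_iff someI)+
    obtain a0 where a0: "a0 \<in> A2" and h_a0: "(h, g \<otimes> a0) \<in> ?E"
      using twisted_rel_rcos_lift[OF g(1) h g(2)] by blast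
    define C' where "C' = ?E' `` {a0}"
    have "a0 \<in> C'"
      unfolding C'_def by (rule equiv_class_self[OF E' a0])
    then have "(a0, SOME a. a \<in> C') \<in> ?E'"
      unfolding C'_def by (metis Image_singleton_iff someI)
    then have "(g \<otimes> a0, g \<otimes> (SOME a. a \<in> C')) \<in> ?E"
      by (rule twisted_rel_mult_central[OF central g(1)])
    then have "(h, g \<otimes> (SOME a. a \<in> C')) \<in> ?E"
      using h_a0 B1.twisted_rel_equiv by (blast elim: equivE transE)
    then have "C = ?cls (Cb, C')"
      unfolding C g_def using equiv_class_eq[OF B1.twisted_rel_equiv] by simp
    moreover have "Cb \<in> carrier (G Mod A2) // ?Eb" "C' \<in> A2 // ?E'"
      unfolding Cb_def C'_def using hc a0 by (auto intro: quotientI)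
    ultimately show "C \<in> ?cls ` (carrier (G Mod A2) // ?Eb \<times> A2 // ?E')"
      by blast
  qed
  then have "ecard (carrier G // ?E) \<le> ecard (carrier (G Mod A2) // ?Eb \<times> A2 // ?E')"
    by (rule order_trans[OF ecard_mono ecard_image_le])
  then show ?thesis
    by (simp add: reidemeister_eq_ecard ecard_Times)
qed

end

theorem mainTheorem7:
  fixes G :: "('a, 'b) monoid_scheme" and A1 A2 B1 :: "'a set" and \<phi> :: "'a \<Rightarrow> 'a"
  assumes grp: "group G"
    and A2B2: "A2 \<lhd> G"
    and B1sub: "subgroup B1 G"
    and A1sub: "subgroup A1 G"
    and A1A2: "A1 \<subseteq> A2"
    and A1B1: "A1 \<lhd> G\<lparr>carrier := B1\<rparr>"
    and A1eq: "A1 = B1 \<inter> A2"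
    and idxA: "finite {A1 #>\<^bsub>G\<^esub> a | a. a \<in> A2}"
    and idxB: "finite {B1 #>\<^bsub>G\<^esub> b | b. b \<in> carrier G}"
    and hom: "\<phi> \<in> hom (G\<lparr>carrier := B1\<rparr>) G"
    and phiA: "\<phi> ` A1 \<subseteq> A2"
  defines "Q \<equiv> {A2 #>\<^bsub>G\<^esub> b | b. b \<in> B1}"
    and "\<phi>bar \<equiv> induced_map G B1 A2 \<phi>"
  shows "(reidemeister (G Mod A2) Q \<phi>bar = \<infinity> \<longrightarrow> reidemeister G B1 \<phi> = \<infinity>)
       \<and> ((reidemeister (G Mod A2) Q \<phi>bar < \<infinity> \<and> finite {x \<in> Q. \<phi>bar x = x}
            \<and> reidemeister (G\<lparr>carrier := A2\<rparr>) A1 \<phi> = \<infinity>) \<longrightarrow> reidemeister G B1 \<phi> = \<infinity>)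
       \<and> ((\<forall>a\<in>A2. \<forall>x\<in>carrier G. a \<otimes>\<^bsub>G\<^esub> x = x \<otimes>\<^bsub>G\<^esub> a) \<longrightarrow>
            reidemeister G B1 \<phi> \<le> reidemeister (G Mod A2) Q \<phi>bar * reidemeister (G\<lparr>carrier := A2\<rparr>) A1 \<phi>)"
proof -
  interpret twisted_extension G A2 B1 \<phi>
    using grp A2B2 B1sub hom phiA unfolding A1eq
    by (intro twisted_extension.intro twisted_extension_axioms.intro)
  have Q_eq: "Q = (\<lambda>b. A2 #>\<^bsub>G\<^esub> b) ` B1"
    unfolding Q_def by blast
  have reidemeister_infinite: "reidemeister G B1 \<phi> = \<infinity>"
    if "finite {x \<in> Q. \<phi>bar x = x}" "reidemeister (G\<lparr>carrier := A2\<rparr>) A1 \<phi> = \<infinity>"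
    using reidemeister_restricted_le that
    by (auto simp: A1eq Q_eq \<phi>bar_def imult_is_infinity top.extremum_unique)
  show ?thesis
    using reidemeister_induced_le reidemeister_infinite reidemeister_le_mult
    unfolding A1eq Q_eq \<phi>bar_def by (auto simp: top.extremum_unique)
qed

end
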